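(* Consider the private information delivery (PID) problem with $K$ messages, $N$ servers and $M$ messages stored per server, where $1\le M\le K$, $K/M\notin\mathbb{Z}$, and $$\lceil K/M \rceil < N < \frac{K}{\gcd(K,M)} - \left(\frac{M}{\gcd(K,M)}-1\right)\left(\lfloor K/M \rfloor - 1\right).$$ Then the capacity satisfies $$C \geq \frac{l}{N + (l-1)(\lfloor K/M \rfloor - 1)},\qquad\text{where } l = \left\lfloor \frac{(N - \lfloor K/M \rfloor + 1)M}{K - (\lfloor K/M \rfloor - 1) M} \right\rfloor.$$
   Context: The PID problem with parameters $(K,N,M)$: There are $K$ independent messages $W_1,\dots,W_K$, each consisting of $L$ i.i.d. uniform symbols from a finite field $\mathbb{F}_p$, so that (in $p$-ary units) $H(W_k)=L$ for all $k$ and $H(W_1,\dots,W_K)=\sum_k H(W_k)$. There are $N$ servers; server $n$ stores $S_n=\{W_k : k\in\mathcal{S}_n\}$ for some $\mathcal{S}_n\subset\{1,\dots,K\}$ with $|\mathcal{S}_n|=M$ (a design choice). The servers share a common random variable $Z$ independent of the messages. For each $k\in\{1,\dots,K\}$, server $n$ sends an answer $A_n^{[k]}$ that is a deterministic function of $(S_n,Z)$ and consists of $D_n$ symbols of $\mathbb{F}_p$ ($D_n$ independent of $k$). Correctness: $H(W_k\mid A_1^{[k]},\dots,A_N^{[k]})=0$ for all $k$. Privacy: for all $k$, $(A_1^{[1]},\dots,A_N^{[1]},W_1)$ and $(A_1^{[k]},\dots,A_N^{[k]},W_k)$ are identically distributed. The rate is $R=L/\sum_n D_n$; a rate is achievable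 if some scheme (choice of $L$, $p$, storage sets, $Z$, answer functions) satisfying these constraints has rate at least $R$; the capacity $C$ is the supremum of achievable rates over all storage designs and schemes. *)

theory Defs
  imports "HOL-Probability.Probability" "HOL-Computational_Algebra.Primes"
begin

(* Messages W_1..W_K (0-indexed as k < K), each a string of L symbols of F_p,
   represented as w k i \<in> {0..<p} for k < K, i < L (extensional elsewhere). *)
definition msg_space :: "nat \<Rightarrow> nat \<Rightarrow> nat \<Rightarrow> (nat \<Rightarrow> nat \<Rightarrow> nat) set" where
  "msg_space p K L = {w. \<forall>k i. (k < K \<and> i < L \<longrightarrow> w k i < p) \<and>
                              (\<not> (k < K \<and> i < L) \<longrightarrow> w k i = 0)}"

definition pid_joint :: "nat \<Rightarrow> nat \<Rightarrow> nat \<Rightarrow> nat pmf \<Rightarrow> ((nat \<Rightarrow> nat \<Rightarrow> nat) \<times> nat) pmf" where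
  "pid_joint p K L Z = pair_pmf (pmf_of_set (msg_space p K L)) Z"

definition pid_answers ::
  "nat \<Rightarrow> (nat \<Rightarrow> nat \<Rightarrow> (nat \<Rightarrow> nat \<Rightarrow> nat) \<Rightarrow> nat \<Rightarrow> nat list) \<Rightarrow> nat
     \<Rightarrow> (nat \<Rightarrow> nat \<Rightarrow> nat) \<Rightarrow> nat \<Rightarrow> nat list list" where
  "pid_answers N A k w z = map (\<lambda>n. A k n w z) [0..<N]"

(* A PID scheme: field size p (prime), message length L, storage sets S n (n < N),
   common randomness Z, answer functions A k n (desired message k, server n),
   answer lengths D n. *)
definition pid_scheme ::
  "nat \<Rightarrow> nat \<Rightarrow> nat \<Rightarrow> nat \<Rightarrow> nat \<Rightarrow> (nat \<Rightarrow> nat set) \<Rightarrow> nat pmf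
     \<Rightarrow> (nat \<Rightarrow> nat \<Rightarrow> (nat \<Rightarrow> nat \<Rightarrow> nat) \<Rightarrow> nat \<Rightarrow> nat list) \<Rightarrow> (nat \<Rightarrow> nat) \<Rightarrow> bool" where
  "pid_scheme K N M p L S Z A D \<longleftrightarrow>
     prime p \<and>
     (\<forall>n<N. S n \<subseteq> {..<K} \<and> card (S n) = M) \<and>
     \<comment> \<open>answer of server n is a deterministic function of (S_n, Z)\<close>
     (\<forall>k<K. \<forall>n<N. \<forall>w w' z. (\<forall>j\<in>S n. w j = w' j) \<longrightarrow> A k n w z = A k n w' z) \<and>
     \<comment> \<open>answer of server n consists of D_n symbols of F_p, independent of k\<close>
     (\<forall>k<K. \<forall>n<N. \<forall>w z. length (A k n w z) = D n \<and> (\<forall>x\<in>set (A k n w z). x < p)) \<and>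
     \<comment> \<open>correctness: H(W_k | A_1^[k],...,A_N^[k]) = 0\<close>
     (\<forall>k<K. \<forall>x\<in>set_pmf (pid_joint p K L Z). \<forall>y\<in>set_pmf (pid_joint p K L Z).
         pid_answers N A k (fst x) (snd x) = pid_answers N A k (fst y) (snd y)
           \<longrightarrow> fst x k = fst y k) \<and>
     \<comment> \<open>privacy: (A^[1], W_1) and (A^[k], W_k) identically distributed\<close>
     (\<forall>k<K. map_pmf (\<lambda>(w, z). (pid_answers N A k w z, w k)) (pid_joint p K L Z) =
             map_pmf (\<lambda>(w, z). (pid_answers N A 0 w z, w 0)) (pid_joint p K L Z))"

definition pid_capacity :: "nat \<Rightarrow> nat \<Rightarrow> nat \<Rightarrow> ereal" where
  "pid_capacity K N M =
     Sup {ereal (real L / real (\<Sum>n<N. D n)) | p L S Z A D. pid_scheme K N M p L S Z A D}"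

end

(* The bound is attained by a linear scheme over F_p.  Let b = floor(K/M) - 1, K' = K - b M,
   N' = N - b and l = floor(N' M / K').  Each of the first b servers stores its own block of M
   messages and answers l symbols; the remaining K' messages are stored cyclically on the other
   N' servers (server c holds messages c M, ..., c M + M - 1 modulo K'), which answer one symbol
   each.  Every message then owns l answer symbols on servers storing it, and the rate is
   l / (b l + N').

   Attach distinct evaluation points x_s in F_p to all answer symbols s.  Z is uniform among the
   vectors whose first l power sums (sum over s of z_s x_s^m) vanish, and the answer for message k
   is Z plus a vector supported on the symbols owned by k whose power sums are the l symbols of
   W_k; it exists because a Vandermonde matrix on distinct points is invertible.  The user reads
   W_k off the power sums of the answers, and the answer vector is uniform among all vectors with
   power sums W_k, so its joint law with W_k does not depend on k. *)
theory Submission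
  imports Defs "HOL-Number_Theory.Cong" "HOL-Computational_Algebra.Polynomial"
begin

lemma prime_dvd_coeff_of_power_sums:
  fixes c x :: "'a \<Rightarrow> int"
  assumes p: "prime p" and J: "finite J" "card J \<le> L" "j0 \<in> J"
    and distinct: "\<And>i j. i \<in> J \<Longrightarrow> j \<in> J \<Longrightarrow> p dvd x i - x j \<Longrightarrow> i = j"
    and power_sums: "\<And>m. m < L \<Longrightarrow> p dvd (\<Sum>j\<in>J. c j * x j ^ m)"
  shows "p dvd c j0"
proof -
  define q where "q = (\<Prod>t\<in>J - {j0}. [:- x t, 1:])"
  have "degree q \<le> card (J - {j0})"
    using degree_prod_sum_le[of "J - {j0}" "\<lambda>t. [:- x t, 1:]"] J(1) by (simp add: q_def o_def)
  also have "\<dots> < L" using J by (metis card_Diff1_less dual_order.strict_trans1)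
  finally have deg: "degree q < L" .
  have "(\<Sum>j\<in>J. c j * poly q (x j)) = (\<Sum>i\<le>degree q. coeff q i * (\<Sum>j\<in>J. c j * x j ^ i))"
    by (simp add: poly_altdef sum_distrib_left sum.swap[of _ J] mult_ac)
  also have "p dvd \<dots>" using deg by (intro dvd_sum dvd_mult[OF power_sums]) auto
  also have "(\<Sum>j\<in>J. c j * poly q (x j)) = c j0 * poly q (x j0)"
    using J by (subst sum.remove[of J j0]) (auto simp: q_def poly_prod intro!: sum.neutral prod_zero)
  finally have "p dvd c j0 * poly q (x j0)" .
  moreover have "\<not> p dvd poly q (x j0)"
    using distinct J p by (auto simp: q_def poly_prod prime_dvd_prod_iff)
  ultimately show ?thesis using p by (simp add: prime_dvd_mult_iff)
qed

lemma inj_on_power_sums_mod: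
  fixes x :: "'a \<Rightarrow> nat"
  assumes p: "prime p" and J: "finite J" "card J \<le> L"
    and x: "inj_on x J" "x ` J \<subseteq> {..<p}"
  shows "inj_on (\<lambda>a. \<lambda>m\<in>{..<L}. (\<Sum>j\<in>J. a j * x j ^ m) mod p) (J \<rightarrow>\<^sub>E {..<p})"
proof (rule inj_onI, rule PiE_ext)
  fix a b j assume a: "a \<in> J \<rightarrow>\<^sub>E {..<p}" and b: "b \<in> J \<rightarrow>\<^sub>E {..<p}" and j: "j \<in> J"
    and eq: "(\<lambda>m\<in>{..<L}. (\<Sum>j\<in>J. a j * x j ^ m) mod p)
           = (\<lambda>m\<in>{..<L}. (\<Sum>j\<in>J. b j * x j ^ m) mod p)"
  have power_sums_dvd: "int p dvd (\<Sum>j\<in>J. (int (a j) - int (b j)) * int (x j) ^ m)" if "m < L" for m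
  proof -
    have "[\<Sum>j\<in>J. a j * x j ^ m = \<Sum>j\<in>J. b j * x j ^ m] (mod p)"
      using fun_cong[OF eq, of m] that by (simp add: cong_def)
    then show ?thesis
      by (simp add: cong_iff_dvd_diff sum_subtractf left_diff_distrib flip: cong_int_iff)
  qed
  have distinct: "i = j" if "i \<in> J" "j \<in> J" "int p dvd int (x i) - int (x j)" for i j
    using that x cong_less_modulus_unique_nat[of "x i" "x j" p]
    by (auto simp: inj_on_eq_iff simp flip: cong_int_iff cong_iff_dvd_diff)
  have "int p dvd int (a j) - int (b j)"
    by (rule prime_dvd_coeff_of_power_sums[where L = L, OF _ J(1) _ j distinct power_sums_dvd])
      (use p J in auto)
  then show "a j = b j"
    using a b j cong_less_modulus_unique_nat[of "a j" "b j" p]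
    by (auto simp flip: cong_int_iff cong_iff_dvd_diff)
qed auto

lemma power_sums_mod_surj:
  fixes x :: "'a \<Rightarrow> nat"
  assumes p: "prime p" and J: "finite J" "card J = L"
    and x: "inj_on x J" "x ` J \<subseteq> {..<p}"
  shows "\<exists>a\<in>J \<rightarrow>\<^sub>E {..<p}. \<forall>m<L. (\<Sum>j\<in>J. a j * x j ^ m) mod p = v m mod p"
proof -
  define power_sums where
    "power_sums a = (\<lambda>m\<in>{..<L}. (\<Sum>j\<in>J. a j * x j ^ m) mod p)" for a
  have p0: "0 < p" using p prime_gt_0_nat by blast
  have inj: "inj_on power_sums (J \<rightarrow>\<^sub>E {..<p})"
    unfolding power_sums_def using inj_on_power_sums_mod[OF p J(1) _ x] J(2) by simp
  have sub: "power_sums ` (J \<rightarrow>\<^sub>E {..<p}) \<subseteq> {..<L} \<rightarrow>\<^sub>E {..<p}"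
    using p0 by (intro image_subsetI) (simp add: power_sums_def)
  have "card (J \<rightarrow>\<^sub>E {..<p}) = card ({..<L} \<rightarrow>\<^sub>E {..<p})"
    using J by (simp add: card_PiE)
  then have onto: "power_sums ` (J \<rightarrow>\<^sub>E {..<p}) = {..<L} \<rightarrow>\<^sub>E {..<p}"
    using card_subset_eq[OF finite_PiE sub] card_image[OF inj] by simp
  have "(\<lambda>m\<in>{..<L}. v m mod p) \<in> {..<L} \<rightarrow>\<^sub>E {..<p}"
    using p0 by simp
  then obtain a where a: "a \<in> J \<rightarrow>\<^sub>E {..<p}" "power_sums a = (\<lambda>m\<in>{..<L}. v m mod p)"
    unfolding onto[symmetric] by (rule imageE) simp
  have "(\<Sum>j\<in>J. a j * x j ^ m) mod p = v m mod p" if "m < L" for m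
    using fun_cong[OF a(2), of m] that by (simp add: power_sums_def)
  with a(1) show ?thesis by blast
qed

lemma map_pmf_pair_eq_bind:
  "map_pmf (\<lambda>(x, y). f x y) (pair_pmf A B) = A \<bind> (\<lambda>x. map_pmf (f x) B)"
  by (simp add: pair_pmf_def map_pmf_def bind_assoc_pmf bind_return_pmf)

lemma finite_msg_space: "finite (msg_space p K L)"
proof -
  let ?G = "{g. \<forall>x. (x \<in> {..<K} \<times> {..<L} \<longrightarrow> g x \<in> {..<p}) \<and>
                   (x \<notin> {..<K} \<times> {..<L} \<longrightarrow> g x = 0)}"
  have "msg_space p K L \<subseteq> curry ` ?G"
  proof
    fix w assume "w \<in> msg_space p K L"
    then show "w \<in> curry ` ?G"
      by (intro image_eqI[of _ _ "case_prod w"]) (auto simp: msg_space_def)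
  qed
  moreover have "finite ?G" by (intro finite_set_of_finite_funs) auto
  ultimately show ?thesis by (meson finite_imageI finite_subset)
qed

lemma msg_space_nonempty: "0 < p \<Longrightarrow> msg_space p K L \<noteq> {}"
  by (auto simp: msg_space_def intro!: exI[of _ "\<lambda>k i. 0"])

lemma msg_space_comp_permutes:
  assumes "\<sigma> permutes {..<K}" "w \<in> msg_space p K L"
  shows "w \<circ> \<sigma> \<in> msg_space p K L"
  using assms permutes_in_image[OF assms(1)] permutes_not_in[OF assms(1)]
  by (auto simp: msg_space_def)

lemma bij_betw_msg_space_permutes:
  assumes "\<sigma> permutes {..<K}"
  shows "bij_betw (\<lambda>w. w \<circ> \<sigma>) (msg_space p K L) (msg_space p K L)"
  by (rule bij_betwI[where g = "\<lambda>w. w \<circ> inv \<sigma>"])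
    (use assms in \<open>auto simp: msg_space_comp_permutes permutes_inv comp_assoc permutes_inv_o\<close>)

lemma map_pmf_msg_space_component:
  assumes "0 < p" "j < K" "k < K"
  shows "map_pmf (\<lambda>w. w j) (pmf_of_set (msg_space p K L))
       = map_pmf (\<lambda>w. w k) (pmf_of_set (msg_space p K L))"
proof -
  let ?\<tau> = "Transposition.transpose j k"
  have "?\<tau> permutes {..<K}" using assms by (simp add: permutes_swap_id)
  then have "map_pmf (\<lambda>w. w \<circ> ?\<tau>) (pmf_of_set (msg_space p K L)) = pmf_of_set (msg_space p K L)"
    using assms finite_msg_space msg_space_nonempty
    by (intro map_pmf_of_set_bij_betw bij_betw_msg_space_permutes) auto
  then have "map_pmf (\<lambda>w. w j) (pmf_of_set (msg_space p K L))
      = map_pmf (\<lambda>w. w j) (map_pmf (\<lambda>w. w \<circ> ?\<tau>) (pmf_of_set (msg_space p K L)))"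
    by simp
  then show ?thesis by (simp add: map_pmf_comp)
qed

(* (n, i) is the i-th answer symbol of server n; slots_of k are the symbols carrying message k. *)
locale slot_design =
  fixes K N M L :: nat and S :: "nat \<Rightarrow> nat set" and D :: "nat \<Rightarrow> nat"
    and slots_of :: "nat \<Rightarrow> (nat \<times> nat) set"
  assumes storage_subset: "n < N \<Longrightarrow> S n \<subseteq> {..<K}"
    and card_storage: "n < N \<Longrightarrow> card (S n) = M"
    and slots_of_subset: "k < K \<Longrightarrow> slots_of k \<subseteq> (SIGMA n:{..<N}. {..<D n})"
    and card_slots_of: "k < K \<Longrightarrow> card (slots_of k) = L"
    and slots_of_stored: "k < K \<Longrightarrow> (n, i) \<in> slots_of k \<Longrightarrow> k \<in> S n"
begin

abbreviation slots :: "(nat \<times> nat) set" where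
  "slots \<equiv> SIGMA n:{..<N}. {..<D n}"

end

locale power_sum_code = slot_design +
  fixes p :: nat and x :: "nat \<times> nat \<Rightarrow> nat"
  assumes prime_p: "prime p"
    and inj_x: "inj_on x slots"
    and x_less: "x ` slots \<subseteq> {..<p}"
begin

definition vectors :: "nat list list set" where
  "vectors = {a. length a = N \<and> (\<forall>n<N. length (a ! n) = D n \<and> (\<forall>i<D n. a ! n ! i < p))}"

definition power_sum :: "nat list list \<Rightarrow> nat \<Rightarrow> nat" where
  "power_sum a m = (\<Sum>(n, i)\<in>slots. a ! n ! i * x (n, i) ^ m) mod p"

definition with_power_sums :: "(nat \<Rightarrow> nat) \<Rightarrow> nat list list set" where
  "with_power_sums v = {a \<in> vectors. \<forall>m<L. power_sum a m = v m mod p}"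

definition vadd :: "nat list list \<Rightarrow> nat list list \<Rightarrow> nat list list" where
  "vadd a b = map (\<lambda>n. map (\<lambda>i. (a ! n ! i + b ! n ! i) mod p) [0..<D n]) [0..<N]"

definition vdiff :: "nat list list \<Rightarrow> nat list list \<Rightarrow> nat list list" where
  "vdiff a b = map (\<lambda>n. map (\<lambda>i. (a ! n ! i + (p - b ! n ! i)) mod p) [0..<D n]) [0..<N]"

definition encodes :: "nat \<Rightarrow> (nat \<Rightarrow> nat) \<Rightarrow> nat list list \<Rightarrow> bool" where
  "encodes k v a \<longleftrightarrow>
     a \<in> with_power_sums v \<and> (\<forall>n<N. \<forall>i<D n. (n, i) \<notin> slots_of k \<longrightarrow> a ! n ! i = 0)"

definition encoding :: "nat \<Rightarrow> (nat \<Rightarrow> nat) \<Rightarrow> nat list list" where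
  "encoding k v = (SOME a. encodes k v a)"

definition noise :: "nat pmf" where
  "noise = map_pmf to_nat (pmf_of_set (with_power_sums (\<lambda>_. 0)))"

definition answer :: "nat \<Rightarrow> nat \<Rightarrow> (nat \<Rightarrow> nat \<Rightarrow> nat) \<Rightarrow> nat \<Rightarrow> nat list" where
  "answer k n w z = map (\<lambda>i. (from_nat z ! n ! i + encoding k (w k) ! n ! i) mod p) [0..<D n]"

lemma p_pos: "0 < p"
  using prime_p prime_gt_0_nat by blast

lemma vectors_eqI:
  assumes "a \<in> vectors" "b \<in> vectors" "\<And>n i. n < N \<Longrightarrow> i < D n \<Longrightarrow> a ! n ! i = b ! n ! i"
  shows "a = b"
  using assms by (auto simp: vectors_def intro!: nth_equalityI)

lemma finite_vectors: "finite vectors"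
proof -
  define B where "B = {b. set b \<subseteq> {..<p} \<and> length b \<le> (\<Sum>n<N. D n)}"
  have "vectors \<subseteq> {a. set a \<subseteq> B \<and> length a \<le> N}"
  proof
    fix a assume a: "a \<in> vectors"
    have "a ! n \<in> B" if "n < N" for n
      using a that member_le_sum[of n "{..<N}" D] by (auto simp: vectors_def B_def in_set_conv_nth)
    with a show "a \<in> {a. set a \<subseteq> B \<and> length a \<le> N}"
      by (auto simp: vectors_def in_set_conv_nth)
  qed
  moreover have "finite B" unfolding B_def by (rule finite_lists_length_le) auto
  ultimately show ?thesis using finite_lists_length_le finite_subset by blast
qed

lemma vadd_in_vectors: "vadd a b \<in> vectors"
  using p_pos by (simp add: vadd_def vectors_def)

lemma vdiff_in_vectors: "vdiff a b \<in> vectors"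
  using p_pos by (simp add: vdiff_def vectors_def)

lemma vadd_nth: "n < N \<Longrightarrow> i < D n \<Longrightarrow> vadd a b ! n ! i = (a ! n ! i + b ! n ! i) mod p"
  by (simp add: vadd_def)

lemma vdiff_nth: "n < N \<Longrightarrow> i < D n \<Longrightarrow> vdiff a b ! n ! i = (a ! n ! i + (p - b ! n ! i)) mod p"
  by (simp add: vdiff_def)

lemma power_sum_less: "power_sum a m < p"
  using p_pos by (simp add: power_sum_def)

lemma power_sum_vadd: "power_sum (vadd a b) m = (power_sum a m + power_sum b m) mod p"
proof -
  have "[\<Sum>(n, i)\<in>slots. vadd a b ! n ! i * x (n, i) ^ m
       = \<Sum>(n, i)\<in>slots. a ! n ! i * x (n, i) ^ m + b ! n ! i * x (n, i) ^ m] (mod p)"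
    by (intro cong_sum) (auto simp: vadd_nth cong_def mod_mult_left_eq add_mult_distrib)
  then show ?thesis
    by (simp add: power_sum_def cong_def case_prod_beta sum.distrib mod_add_eq)
qed

lemma vadd_vdiff:
  assumes "a \<in> vectors" "b \<in> vectors"
  shows "vadd (vdiff a b) b = a"
proof (rule vectors_eqI[OF vadd_in_vectors assms(1)])
  fix n i assume ni: "n < N" "i < D n"
  then have "a ! n ! i < p" "b ! n ! i < p" using assms by (auto simp: vectors_def)
  then show "vadd (vdiff a b) b ! n ! i = a ! n ! i"
    using ni by (simp add: vadd_nth vdiff_nth mod_add_left_eq)
qed

lemma vadd_right_cancel:
  assumes "a \<in> vectors" "b \<in> vectors" "vadd a c = vadd b c"
  shows "a = b"
proof (rule vectors_eqI[OF assms(1,2)])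
  fix n i assume ni: "n < N" "i < D n"
  then have "[a ! n ! i + c ! n ! i = b ! n ! i + c ! n ! i] (mod p)"
    using arg_cong[OF assms(3), of "\<lambda>v. v ! n ! i"] by (simp add: vadd_nth cong_def)
  moreover have "a ! n ! i < p" "b ! n ! i < p" using assms ni by (auto simp: vectors_def)
  ultimately show "a ! n ! i = b ! n ! i"
    by (simp add: cong_add_rcancel_nat cong_less_modulus_unique_nat)
qed

lemma zero_in_with_power_sums: "map (\<lambda>n. replicate (D n) 0) [0..<N] \<in> with_power_sums (\<lambda>_. 0)"
proof -
  have "power_sum (map (\<lambda>n. replicate (D n) 0) [0..<N]) m = 0" for m
    unfolding power_sum_def by (subst sum.neutral) auto
  then show ?thesis using p_pos by (simp add: with_power_sums_def vectors_def)
qed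

lemma finite_with_power_sums: "finite (with_power_sums v)"
  using finite_vectors by (simp add: with_power_sums_def)

lemma bij_betw_vadd:
  assumes c: "c \<in> with_power_sums v"
  shows "bij_betw (\<lambda>a. vadd a c) (with_power_sums (\<lambda>_. 0)) (with_power_sums v)"
proof (rule bij_betw_imageI)
  show "inj_on (\<lambda>a. vadd a c) (with_power_sums (\<lambda>_. 0))"
    using vadd_right_cancel by (auto simp: inj_on_def with_power_sums_def)
  show "(\<lambda>a. vadd a c) ` with_power_sums (\<lambda>_. 0) = with_power_sums v"
  proof (intro equalityI image_subsetI subsetI)
    fix a assume "a \<in> with_power_sums (\<lambda>_. 0)"
    then show "vadd a c \<in> with_power_sums v"
      using c by (simp add: with_power_sums_def vadd_in_vectors power_sum_vadd)
  next
    fix b assume b: "b \<in> with_power_sums v"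
    have b_eq: "vadd (vdiff b c) c = b"
      using b c by (simp add: with_power_sums_def vadd_vdiff)
    have "power_sum (vdiff b c) m = 0" if "m < L" for m
    proof -
      have "power_sum b m = (power_sum (vdiff b c) m + power_sum c m) mod p"
        using power_sum_vadd[of "vdiff b c" c m] b_eq by simp
      then have "[power_sum (vdiff b c) m + power_sum c m = power_sum c m] (mod p)"
        using b c that by (simp add: with_power_sums_def cong_def)
      then have "[power_sum (vdiff b c) m = 0] (mod p)"
        by (simp add: cong_add_rcancel_0_nat)
      then show ?thesis
        using power_sum_less p_pos by (rule cong_less_modulus_unique_nat)
    qed
    then have "vdiff b c \<in> with_power_sums (\<lambda>_. 0)"
      by (simp add: with_power_sums_def vdiff_in_vectors)
    then show "b \<in> (\<lambda>a. vadd a c) ` with_power_sums (\<lambda>_. 0)"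
      using b_eq by force
  qed
qed

lemma encodes_exists:
  assumes k: "k < K"
  shows "\<exists>a. encodes k v a"
proof -
  have J: "slots_of k \<subseteq> slots" "finite (slots_of k)"
    using slots_of_subset[OF k] by (auto intro: finite_subset)
  have "x ` slots_of k \<subseteq> {..<p}"
    using image_mono[OF J(1)] x_less by (rule order_trans)
  then obtain c where c: "c \<in> slots_of k \<rightarrow>\<^sub>E {..<p}"
    and power_sums: "\<forall>m<L. (\<Sum>s\<in>slots_of k. c s * x s ^ m) mod p = v m mod p"
    using power_sums_mod_surj[OF prime_p J(2) card_slots_of[OF k] inj_on_subset[OF inj_x J(1)]]
    by blast
  define a where "a = map (\<lambda>n. map (\<lambda>i. if (n, i) \<in> slots_of k then c (n, i) else 0) [0..<D n]) [0..<N]"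
  have "power_sum a m = v m mod p" if "m < L" for m
  proof -
    have "power_sum a m = (\<Sum>s\<in>slots. if s \<in> slots_of k then c s * x s ^ m else 0) mod p"
      unfolding power_sum_def by (intro arg_cong[where f = "\<lambda>t. t mod p"] sum.cong) (auto simp: a_def)
    also have "\<dots> = (\<Sum>s\<in>slots_of k. c s * x s ^ m) mod p"
      using J(1) by (simp add: sum.inter_restrict[symmetric] Int_absorb1)
    finally show ?thesis using power_sums that by simp
  qed
  moreover have "a \<in> vectors" using c p_pos by (auto simp: a_def vectors_def)
  moreover have "a ! n ! i = 0" if "n < N" "i < D n" "(n, i) \<notin> slots_of k" for n i
    using that by (simp add: a_def)
  ultimately have "encodes k v a" by (simp add: encodes_def with_power_sums_def)
  then show ?thesis ..
qed

lemma encodes_encoding: "k < K \<Longrightarrow> encodes k v (encoding k v)"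
  unfolding encoding_def by (rule someI_ex[OF encodes_exists])

lemma pid_answers_eq: "pid_answers N answer k w z = vadd (from_nat z) (encoding k (w k))"
  by (simp add: pid_answers_def answer_def vadd_def)

lemma set_pmf_noise: "set_pmf noise = to_nat ` with_power_sums (\<lambda>_. 0)"
proof -
  have "with_power_sums (\<lambda>_. 0) \<noteq> {}" using zero_in_with_power_sums by blast
  then show ?thesis by (simp add: noise_def finite_with_power_sums)
qed

lemma answers_uniform:
  assumes "k < K"
  shows "map_pmf (pid_answers N answer k w) noise = pmf_of_set (with_power_sums (w k))"
proof -
  have "map_pmf (pid_answers N answer k w) noise
      = map_pmf (\<lambda>a. vadd a (encoding k (w k))) (pmf_of_set (with_power_sums (\<lambda>_. 0)))"
    by (simp add: noise_def map_pmf_comp pid_answers_eq)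
  also have "\<dots> = pmf_of_set (with_power_sums (w k))"
    using encodes_encoding[OF assms] finite_with_power_sums zero_in_with_power_sums
    by (intro map_pmf_of_set_bij_betw bij_betw_vadd) (auto simp: encodes_def)
  finally show ?thesis .
qed

lemma pid_privacy:
  assumes "k < K"
  shows "map_pmf (\<lambda>(w, z). (pid_answers N answer k w z, w k)) (pid_joint p K L noise)
       = map_pmf (\<lambda>(w, z). (pid_answers N answer 0 w z, w 0)) (pid_joint p K L noise)"
proof -
  define W where "W = pmf_of_set (msg_space p K L)"
  define U where "U v = map_pmf (\<lambda>a. (a, v)) (pmf_of_set (with_power_sums v))" for v
  have "map_pmf (\<lambda>(w, z). (pid_answers N answer j w z, w j)) (pid_joint p K L noise)
      = map_pmf (\<lambda>w. w j) W \<bind> U" if "j < K" for j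
  proof -
    have "map_pmf (\<lambda>(w, z). (pid_answers N answer j w z, w j)) (pid_joint p K L noise)
        = W \<bind> (\<lambda>w. map_pmf (\<lambda>a. (a, w j)) (map_pmf (pid_answers N answer j w) noise))"
      by (simp add: pid_joint_def W_def map_pmf_pair_eq_bind map_pmf_comp)
    also have "\<dots> = W \<bind> (\<lambda>w. U (w j))"
      using that by (simp add: answers_uniform U_def)
    finally show ?thesis by (simp add: bind_map_pmf)
  qed
  then show ?thesis
    using assms map_pmf_msg_space_component[OF p_pos, of k K 0 L] by (simp add: W_def)
qed

lemma power_sum_pid_answers:
  assumes "w \<in> msg_space p K L" "z \<in> set_pmf noise" "k < K" "m < L"
  shows "power_sum (pid_answers N answer k w z) m = w k m"
proof -
  have "from_nat z \<in> with_power_sums (\<lambda>_. 0)"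
    using assms(2) by (auto simp: set_pmf_noise)
  moreover have "encoding k (w k) \<in> with_power_sums (w k)"
    using encodes_encoding[OF assms(3)] by (simp add: encodes_def)
  ultimately have "power_sum (pid_answers N answer k w z) m = w k m mod p"
    using assms(4) by (simp add: pid_answers_eq power_sum_vadd with_power_sums_def power_sum_less)
  also have "\<dots> = w k m" using assms(1,3,4) by (simp add: msg_space_def)
  finally show ?thesis .
qed

lemma set_pmf_pid_joint: "set_pmf (pid_joint p K L noise) = msg_space p K L \<times> set_pmf noise"
  using finite_msg_space msg_space_nonempty[OF p_pos] by (simp add: pid_joint_def)

lemma pid_correct:
  assumes "k < K" "u \<in> set_pmf (pid_joint p K L noise)" "u' \<in> set_pmf (pid_joint p K L noise)"
    and "pid_answers N answer k (fst u) (snd u) = pid_answers N answer k (fst u') (snd u')"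
  shows "fst u k = fst u' k"
proof
  have joint: "fst u \<in> msg_space p K L" "snd u \<in> set_pmf noise"
    "fst u' \<in> msg_space p K L" "snd u' \<in> set_pmf noise"
    using assms(2,3) by (auto simp: set_pmf_pid_joint mem_Times_iff)
  fix m show "fst u k m = fst u' k m"
  proof (cases "m < L")
    case True
    then show ?thesis
      using power_sum_pid_answers[OF joint(1,2) assms(1) True]
        power_sum_pid_answers[OF joint(3,4) assms(1) True] assms(4)
      by simp
  next
    case False
    then show ?thesis using joint by (simp add: msg_space_def)
  qed
qed

theorem is_pid_scheme: "pid_scheme K N M p L S noise answer D"
  unfolding pid_scheme_def
proof (intro conjI allI impI ballI)
  show "prime p" by (rule prime_p)
next
  fix n assume "n < N"
  then show "S n \<subseteq> {..<K}" "card (S n) = M" by (simp_all add: storage_subset card_storage)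
next
  fix k n z and w w' :: "nat \<Rightarrow> nat \<Rightarrow> nat"
  assume k: "k < K" and n: "n < N" and w: "\<forall>j\<in>S n. w j = w' j"
  show "answer k n w z = answer k n w' z"
  proof (cases "k \<in> S n")
    case True
    with w show ?thesis by (simp add: answer_def)
  next
    case False
    then have "encoding k v ! n ! i = 0" if "i < D n" for v i
      using encodes_encoding[OF k, of v] slots_of_stored[OF k] n that by (auto simp: encodes_def)
    then show ?thesis by (simp add: answer_def)
  qed
next
  fix k n z and w :: "nat \<Rightarrow> nat \<Rightarrow> nat" assume "k < K" "n < N"
  show "length (answer k n w z) = D n" by (simp add: answer_def)
next
  fix k n z y and w :: "nat \<Rightarrow> nat \<Rightarrow> nat" assume "y \<in> set (answer k n w z)"
  then show "y < p" using p_pos by (auto simp: answer_def)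
next
  fix k u u'
  assume "k < K" "u \<in> set_pmf (pid_joint p K L noise)" "u' \<in> set_pmf (pid_joint p K L noise)"
    "pid_answers N answer k (fst u) (snd u) = pid_answers N answer k (fst u') (snd u')"
  then show "fst u k = fst u' k" by (rule pid_correct)
qed (rule pid_privacy)

end

context slot_design
begin

theorem pid_scheme_exists: "\<exists>p Z A. pid_scheme K N M p L S Z A D"
proof -
  obtain p where p: "prime p" "card slots < p" using bigger_prime by blast
  obtain x where x: "bij_betw x slots {0..<card slots}"
    using ex_bij_betw_finite_nat[of slots] by auto
  interpret power_sum_code K N M L S D slots_of p x
  proof
    show "inj_on x slots" using x by (rule bij_betw_imp_inj_on)
    show "x ` slots \<subseteq> {..<p}" using bij_betw_imp_surj_on[OF x] p(2) by auto
  qed (rule p(1))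
  show ?thesis using is_pid_scheme by blast
qed

lemma rate_le_pid_capacity: "ereal (real L / real (\<Sum>n<N. D n)) \<le> pid_capacity K N M"
proof -
  obtain p Z A where "pid_scheme K N M p L S Z A D" using pid_scheme_exists by blast
  then show ?thesis unfolding pid_capacity_def by (intro Sup_upper) blast
qed

end

definition cyclic_storage :: "nat \<Rightarrow> nat \<Rightarrow> nat \<Rightarrow> nat set" where
  "cyclic_storage K M c = (\<lambda>t. (c * M + t) mod K) ` {..<M}"

(* Laying copies of messages 0, ..., K - 1 end to end and cutting the sequence into blocks of M
   (block c is cyclic_storage K M c), the q-th copy of message j falls into block (q K + j) div M. *)
definition cyclic_server :: "nat \<Rightarrow> nat \<Rightarrow> nat \<Rightarrow> nat \<Rightarrow> nat" where
  "cyclic_server K M j q = (q * K + j) div M"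

lemma cyclic_storage_subset: "0 < K \<Longrightarrow> cyclic_storage K M c \<subseteq> {..<K}"
  by (auto simp: cyclic_storage_def)

lemma card_cyclic_storage:
  assumes "M \<le> K"
  shows "card (cyclic_storage K M c) = M"
proof -
  have "inj_on (\<lambda>t. (c * M + t) mod K) {..<M}"
  proof (rule inj_onI)
    fix t t' assume "t \<in> {..<M}" "t' \<in> {..<M}" "(c * M + t) mod K = (c * M + t') mod K"
    then show "t = t'"
      using assms
      by (auto simp: cong_def[symmetric] cong_add_lcancel_nat cong_less_modulus_unique_nat)
  qed
  then show ?thesis by (simp add: cyclic_storage_def card_image)
qed

lemma in_cyclic_storage_cyclic_server:
  assumes "0 < M" "j < K"
  shows "j \<in> cyclic_storage K M (cyclic_server K M j q)"
proof -
  have "cyclic_server K M j q * M + (q * K + j) mod M = q * K + j"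
    by (simp add: cyclic_server_def)
  then have "(cyclic_server K M j q * M + (q * K + j) mod M) mod K = j"
    using assms(2) by simp
  moreover have "(q * K + j) mod M < M" using assms(1) by simp
  ultimately show ?thesis
    unfolding cyclic_storage_def by (intro image_eqI[where x = "(q * K + j) mod M"]) auto
qed

lemma strict_mono_cyclic_server:
  assumes "0 < M" "M \<le> K"
  shows "strict_mono (cyclic_server K M j)"
proof (rule strict_mono_Suc_iff[THEN iffD2], rule allI)
  fix q
  have "(q * K + j) div M < (q * K + j + M) div M" using assms(1) by simp
  also have "\<dots> \<le> (Suc q * K + j) div M" using assms(2) by (intro div_le_mono) simp
  finally show "cyclic_server K M j q < cyclic_server K M j (Suc q)"
    by (simp add: cyclic_server_def)
qed

lemma cyclic_server_less:
  assumes "0 < M" "j < K" "q < l" "l * K \<le> N * M"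
  shows "cyclic_server K M j q < N"
proof -
  have "q * K + j < Suc q * K" using assms(2) by simp
  also have "\<dots> \<le> l * K" using assms(3) by (intro mult_le_mono1) simp
  also have "\<dots> \<le> N * M" by (fact assms(4))
  finally show ?thesis using assms(1) by (simp add: cyclic_server_def div_less_iff_less_mult)
qed

locale pid_design =
  fixes K N M :: nat
  assumes M_pos: "0 < M" and M_le_K: "M \<le> K" and div_le_N: "K div M \<le> N"
begin

definition blocks :: nat where "blocks = K div M - 1"
definition K' :: nat where "K' = K - blocks * M"
definition N' :: nat where "N' = N - blocks"
definition l :: nat where "l = N' * M div K'"

definition storage :: "nat \<Rightarrow> nat set" where
  "storage n = (if n < blocks then {n * M..<Suc n * M}
                else (+) (blocks * M) ` cyclic_storage K' M (n - blocks))"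

definition load :: "nat \<Rightarrow> nat" where
  "load n = (if n < blocks then l else 1)"

definition msg_slots :: "nat \<Rightarrow> (nat \<times> nat) set" where
  "msg_slots k = (if k < blocks * M then Pair (k div M) ` {..<l}
                  else (\<lambda>q. (blocks + cyclic_server K' M (k - blocks * M) q, 0)) ` {..<l})"

lemma Suc_blocks: "Suc blocks = K div M"
  using M_pos M_le_K by (simp add: blocks_def div_greater_zero_iff)

lemma K_eq: "K = blocks * M + K'"
  and M_le_K': "M \<le> K'"
proof -
  have "blocks * M + M \<le> K"
    using div_times_less_eq_dividend[of K M] by (simp flip: Suc_blocks)
  then show "K = blocks * M + K'" "M \<le> K'" unfolding K'_def by linarith+
qed

lemma l_K'_le: "l * K' \<le> N' * M"
  by (simp add: l_def div_times_less_eq_dividend)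

lemma blocks_le_N: "blocks \<le> N"
  using div_le_N by (simp add: blocks_def)

lemma storage_lessThan: "storage n \<subseteq> {..<K}"
proof (cases "n < blocks")
  case True
  then have "Suc n * M \<le> blocks * M" by (intro mult_le_mono1) simp
  with True show ?thesis using K_eq by (auto simp: storage_def)
next
  case False
  have "cyclic_storage K' M (n - blocks) \<subseteq> {..<K'}"
    using M_le_K' M_pos by (intro cyclic_storage_subset) simp
  with False show ?thesis using K_eq by (fastforce simp: storage_def)
qed

lemma card_storage_eq: "card (storage n) = M"
  using M_le_K' by (simp add: storage_def card_image card_cyclic_storage)

lemma msg_slots_subset:
  assumes k: "k < K"
  shows "msg_slots k \<subseteq> (SIGMA n:{..<N}. {..<load n})"
proof (cases "k < blocks * M")
  case True
  then have "k div M < blocks" by (simp add: div_less_iff_less_mult M_pos)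
  with True show ?thesis using blocks_le_N by (auto simp: msg_slots_def load_def)
next
  case False
  have j: "k - blocks * M < K'" using k K_eq False by linarith
  have "blocks + cyclic_server K' M (k - blocks * M) q < N" if "q < l" for q
    using cyclic_server_less[OF M_pos j that l_K'_le] blocks_le_N by (simp add: N'_def)
  with False show ?thesis by (auto simp: msg_slots_def load_def)
qed

lemma card_msg_slots: "card (msg_slots k) = l"
  using strict_mono_cyclic_server[OF M_pos M_le_K']
  by (auto simp: msg_slots_def card_image inj_on_def strict_mono_eq)

lemma in_storage_if_msg_slot:
  assumes k: "k < K" and slot: "(n, i) \<in> msg_slots k"
  shows "k \<in> storage n"
proof (cases "k < blocks * M")
  case True
  with slot have n: "n = k div M" "n < blocks"
    by (auto simp: msg_slots_def div_less_iff_less_mult M_pos)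
  have "k div M * M \<le> k" "k < Suc (k div M) * M"
    unfolding mult_Suc using div_mult_mod_eq[of k M] mod_less_divisor[OF M_pos, of k] by linarith+
  with n show ?thesis by (simp add: storage_def)
next
  case False
  with slot obtain q where "n = blocks + cyclic_server K' M (k - blocks * M) q"
    by (auto simp: msg_slots_def)
  moreover have "k - blocks * M \<in> cyclic_storage K' M (cyclic_server K' M (k - blocks * M) q)"
    using k K_eq False by (intro in_cyclic_storage_cyclic_server M_pos) linarith
  ultimately show ?thesis using False by (force simp: storage_def)
qed

sublocale slot_design K N M l storage load msg_slots
  by unfold_locales
    (simp_all add: storage_lessThan card_storage_eq msg_slots_subset card_msg_slots
      in_storage_if_msg_slot)

lemma sum_load: "(\<Sum>n<N. load n) = blocks * l + N'"
proof -
  have "(\<Sum>n<N. load n) = (\<Sum>n<blocks. load n) + (\<Sum>n\<in>{blocks..<N}. load n)"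
    using sum.atLeastLessThan_concat[of 0 blocks N load] blocks_le_N by (simp add: atLeast0LessThan)
  also have "\<dots> = blocks * l + N'"
    by (simp add: load_def N'_def)
  finally show ?thesis .
qed

lemma design_rate_le_pid_capacity: "ereal (real l / real (blocks * l + N')) \<le> pid_capacity K N M"
  using rate_le_pid_capacity by (simp add: sum_load)

end

theorem theorem3:
  fixes K N M :: nat
  assumes "1 \<le> M" and "M \<le> K" and "\<not> M dvd K"
    and "\<lceil>real K / real M\<rceil> < int N"
    and "real N < real K / real (gcd K M)
                  - (real M / real (gcd K M) - 1) * (real_of_int \<lfloor>real K / real M\<rfloor> - 1)"
  shows "pid_capacity K N M \<ge>
    (let l = \<lfloor>(real N - real_of_int \<lfloor>real K / real M\<rfloor> + 1) * real M
               / (real K - (real_of_int \<lfloor>real K / real M\<rfloor> - 1) * real M)\<rfloor>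
     in ereal (real_of_int l /
          (real N + (real_of_int l - 1) * (real_of_int \<lfloor>real K / real M\<rfloor> - 1))))"
proof -
  have floor_eq: "\<lfloor>real K / real M\<rfloor> = int (K div M)"
    by (rule floor_divide_of_nat_eq)
  have "K div M \<le> N"
    using assms(4) floor_le_ceiling[of "real K / real M"] by (simp add: floor_eq)
  then interpret pid_design K N M
    using assms(1,2) by unfold_locales simp_all
  have blocks: "real_of_int \<lfloor>real K / real M\<rfloor> - 1 = real blocks"
    by (simp add: floor_eq flip: Suc_blocks)
  have "real N - real_of_int \<lfloor>real K / real M\<rfloor> + 1 = real N'"
    using blocks blocks_le_N by (simp add: N'_def of_nat_diff)
  moreover have "real K - (real_of_int \<lfloor>real K / real M\<rfloor> - 1) * real M = real K'"
    using K_eq blocks by (simp add: K'_def of_nat_diff)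
  ultimately have "\<lfloor>(real N - real_of_int \<lfloor>real K / real M\<rfloor> + 1) * real M
               / (real K - (real_of_int \<lfloor>real K / real M\<rfloor> - 1) * real M)\<rfloor> = int l"
    using floor_divide_of_nat_eq[of "N' * M" K'] by (simp add: l_def)
  moreover have "real N + (real l - 1) * real blocks = real (blocks * l + N')"
    using blocks_le_N by (simp add: N'_def of_nat_diff algebra_simps)
  ultimately show ?thesis
    using design_rate_le_pid_capacity by (simp add: Let_def blocks)
qed

end
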